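(* Let $F(x_1,\dots,x_n)=f_1\wedge\dots\wedge f_m$ and $G(y_1,\dots,y_{n'})=g_1\wedge\dots\wedge g_{m'}$ be CNF formulas such that $F\le^{\oplus}G$. If there exists a $\mathsf{Res}[\oplus]$ refutation of $G$ with $s$ steps, then there exists a $\mathsf{Res}[\oplus]$ refutation of $F$ with $2nm'+s$ steps. (In particular, $\mathsf{Res}[\oplus]$ is closed under simple parity reductions.)
   Context: Simple parity reduction: $F\le^{\oplus}G$ if there is an $\mathbb{F}_2$-linear map $\mathsf{redu}:\{0,1\}^n\to\{0,1\}^{n'}$ (each output bit is the XOR of a subset of input bits; $g\circ\mathsf{redu}$ denotes substituting each $y_i$ by the corresponding linear form) such that for every clause $g$ of $G$, one of: $g\circ\mathsf{redu}\equiv\mathsf{True}$; $g\circ\mathsf{redu}$ equals some clause of $F$; or $g$ is a width-1 clause (single literal) and $g\circ\mathsf{redu}$ is the XOR (sum over $\mathbb{F}_2$ of the corresponding linear equations) of a subset of clauses of $F$, which are then width-1. $\mathsf{Res}[\oplus]$ (resolution over linear equations modulo 2, Itsykson–Sokolov): lines are linear clauses, i.e., disjunctions of linear equations over $\mathbb{F}_2$; a refutation of a CNF is a sequence of linear clauses ending with the empty clause, where each line is an initial clause (a literal $x$ read as $x=1$, $\neg x$ as $x=0$), or is derived by the resolution rule (from $C\vee(f=0)$ and $D\vee(f=1)$ derive $C\vee D$), or by weakening (derive any linear clause semantically implied by an earlier line). The number of steps is the number of lines. *)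

theory Defs
  imports Main
begin

text \<open>Propositional variables are natural numbers; a formula in n variables uses
  variables 0,...,n-1 (standing for x_1,...,x_n).  A literal is a pair (v, b):
  (v, True) is the positive literal x_v, (v, False) the negative literal.\<close>

type_synonym lit = "nat \<times> bool"
type_synonym clause = "lit set"
type_synonym cnf = "clause list"

definition cnf_over :: "nat \<Rightarrow> cnf \<Rightarrow> bool" where
  "cnf_over n F \<longleftrightarrow> (\<forall>C\<in>set F. \<forall>(v, b)\<in>C. v < n)"

text \<open>A linear equation over F_2: (S, b) stands for (sum of x_i, i in S) = b (mod 2).
  A linear clause is a (finite) set of linear equations, read as their disjunction.\<close>

type_synonym leq = "nat set \<times> bool"
type_synonym lclause = "leq set"

definition eval_leq :: "(nat \<Rightarrow> bool) \<Rightarrow> leq \<Rightarrow> bool" where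
  "eval_leq \<alpha> e \<longleftrightarrow> (odd (card {i \<in> fst e. \<alpha> i}) = snd e)"

definition eval_lclause :: "(nat \<Rightarrow> bool) \<Rightarrow> lclause \<Rightarrow> bool" where
  "eval_lclause \<alpha> L \<longleftrightarrow> (\<exists>e\<in>L. eval_leq \<alpha> e)"

definition lclause_over :: "nat \<Rightarrow> lclause \<Rightarrow> bool" where
  "lclause_over n L \<longleftrightarrow> finite L \<and> (\<forall>e\<in>L. fst e \<subseteq> {..<n})"

definition limplies :: "lclause \<Rightarrow> lclause \<Rightarrow> bool" where
  "limplies L1 L2 \<longleftrightarrow> (\<forall>\<alpha>. eval_lclause \<alpha> L1 \<longrightarrow> eval_lclause \<alpha> L2)"

definition ltaut :: "lclause \<Rightarrow> bool" where
  "ltaut L \<longleftrightarrow> (\<forall>\<alpha>. eval_lclause \<alpha> L)"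

definition lit_eq :: "lit \<Rightarrow> leq" where
  "lit_eq l = ({fst l}, snd l)"

definition clause_lclause :: "clause \<Rightarrow> lclause" where
  "clause_lclause C = lit_eq ` C"

definition res_rule :: "lclause \<Rightarrow> lclause \<Rightarrow> lclause \<Rightarrow> bool" where
  "res_rule A B R \<longleftrightarrow>
     (\<exists>f C D. A = insert (f, False) C \<and> B = insert (f, True) D \<and> R = C \<union> D)"

text \<open>Its number of steps is its length.\<close>

definition valid_line :: "nat \<Rightarrow> cnf \<Rightarrow> lclause list \<Rightarrow> nat \<Rightarrow> bool" where
  "valid_line n F Ls k \<longleftrightarrow>
     lclause_over n (Ls ! k) \<and>
     ((\<exists>C\<in>set F. Ls ! k = clause_lclause C)
      \<or> (\<exists>i<k. \<exists>j<k. res_rule (Ls ! i) (Ls ! j) (Ls ! k))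
      \<or> (\<exists>i<k. limplies (Ls ! i) (Ls ! k)))"

definition resxor_refutation :: "nat \<Rightarrow> cnf \<Rightarrow> lclause list \<Rightarrow> bool" where
  "resxor_refutation n F Ls \<longleftrightarrow>
     Ls \<noteq> [] \<and> last Ls = {} \<and> (\<forall>k<length Ls. valid_line n F Ls k)"

text \<open>An F_2-linear map redu : {0,1}^n \<rightarrow> {0,1}^n' is given by R: output bit i
  (i < n') is the XOR of the input bits in R i \<subseteq> {0..n-1}.\<close>

definition subst_clause :: "(nat \<Rightarrow> nat set) \<Rightarrow> clause \<Rightarrow> lclause" where
  "subst_clause R g = (\<lambda>l. (R (fst l), snd l)) ` g"

text \<open>The XOR (sum over F_2) of the linear equations of the width-1 clauses F!j, j in J.\<close>

definition unit_sum :: "cnf \<Rightarrow> nat set \<Rightarrow> leq" where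
  "unit_sum F J =
     ({u. odd (card {j \<in> J. fst (the_elem (F ! j)) = u})},
      odd (card {j \<in> J. snd (the_elem (F ! j))}))"

definition simple_parity_red :: "nat \<Rightarrow> cnf \<Rightarrow> nat \<Rightarrow> cnf \<Rightarrow> (nat \<Rightarrow> nat set) \<Rightarrow> bool" where
  "simple_parity_red n F n' G R \<longleftrightarrow>
     (\<forall>i<n'. R i \<subseteq> {..<n}) \<and>
     (\<forall>g\<in>set G.
        ltaut (subst_clause R g)
        \<or> (\<exists>f\<in>set F. subst_clause R g = clause_lclause f)
        \<or> (card g = 1 \<and>
           (\<exists>J \<subseteq> {..<length F}. (\<forall>j\<in>J. card (F ! j) = 1) \<and>
               subst_clause R g = {unit_sum F J})))"

end

(*
  Substituting the linear map into every line of a Res[xor] refutation of G gives a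
  refutation of F, except at the initial clauses: resolution steps remain resolution steps,
  weakenings remain weakenings, and the empty clause stays empty.  So it suffices to derive
  each substituted clause g o redu of G from F.  A tautology is one weakening of any line
  and a clause of F is an initial line.  Otherwise g o redu is a single equation which is
  the F_2-sum of unit clauses of F.  If F contains two complementary unit clauses it has a
  three-line refutation; otherwise one assignment beta satisfies all unit clauses, the
  equation reads (sum of x_v, v in S) = (sum of beta v, v in S) with a unit clause
  x_v = beta v in F for every v in S, and it is built from these units with one weakening
  and one resolution per variable.  Listing the at most n unit clauses once, every clause
  of G costs at most 2n - 1 lines.  One clause of G costs nothing: some clause of G is
  falsified by redu beta, so its image is neither a tautology nor a sum of units (both are
  satisfied by beta) and must be a clause of F, which is listed along with the units.
  Hence at most (n + 1) + (m' - 1)(2n - 1) <= 2nm' lines precede the simulated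
  refutation, and copies of the empty clause pad the total to exactly 2nm' + s.
*)

theory Submission
  imports Defs
begin

section \<open>Res[xor] derivations\<close>

definition resxor_inference :: "nat \<Rightarrow> cnf \<Rightarrow> lclause list \<Rightarrow> lclause \<Rightarrow> bool" where
  "resxor_inference n F Ls L \<longleftrightarrow> lclause_over n L \<and>
     ((\<exists>C\<in>set F. L = clause_lclause C) \<or> (\<exists>X\<in>set Ls. \<exists>Y\<in>set Ls. res_rule X Y L)
      \<or> (\<exists>X\<in>set Ls. limplies X L))"

definition resxor_derivation :: "nat \<Rightarrow> cnf \<Rightarrow> lclause list \<Rightarrow> bool" where
  "resxor_derivation n F Ls \<longleftrightarrow> (\<forall>k<length Ls. valid_line n F Ls k)"

lemma valid_line_append:
  assumes "k < length Ls"
  shows "valid_line n F (Ls @ Ls') k \<longleftrightarrow> valid_line n F Ls k"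
proof -
  have "\<And>i. i \<le> k \<Longrightarrow> (Ls @ Ls') ! i = Ls ! i"
    using assms by (simp add: nth_append)
  then show ?thesis
    unfolding valid_line_def by (simp cong: conj_cong)
qed

lemma valid_line_snoc_length:
  "valid_line n F (Ls @ [L]) (length Ls) \<longleftrightarrow> resxor_inference n F Ls L"
proof -
  have bex_set: "(\<exists>X\<in>set Ls. P X) \<longleftrightarrow> (\<exists>i<length Ls. P (Ls ! i))" for P
    using all_set_conv_all_nth[of Ls "\<lambda>X. \<not> P X"] by blast
  show ?thesis
    unfolding valid_line_def resxor_inference_def
    by (simp add: bex_set nth_append cong: conj_cong)
qed

lemma resxor_derivation_Nil [simp]: "resxor_derivation n F []"
  by (simp add: resxor_derivation_def)

lemma resxor_derivation_snoc [simp]: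
  "resxor_derivation n F (Ls @ [L]) \<longleftrightarrow> resxor_derivation n F Ls \<and> resxor_inference n F Ls L"
  unfolding resxor_derivation_def
  by (auto simp: less_Suc_eq valid_line_append simp flip: valid_line_snoc_length)

lemma lclause_over_clause_lclause:
  assumes "cnf_over n F" "C \<in> set F"
  shows "lclause_over n (clause_lclause C)"
proof -
  have "C \<subseteq> {..<n} \<times> UNIV"
    using assms unfolding cnf_over_def by auto
  then have "finite C"
    by (rule finite_subset) auto
  then show ?thesis
    using assms unfolding lclause_over_def clause_lclause_def lit_eq_def cnf_over_def by fastforce
qed

lemma resxor_derivation_initial_clauses:
  assumes "cnf_over n F" "set Ls \<subseteq> clause_lclause ` set F"
  shows "resxor_derivation n F Ls"
  using assms(2)
proof (induction Ls rule: rev_induct)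
  case (snoc L Ls)
  then show ?case
    using lclause_over_clause_lclause[OF assms(1)] by (auto simp: resxor_inference_def)
qed simp

lemma resxor_derivation_lclause_over:
  "resxor_derivation n F Ls \<Longrightarrow> X \<in> set Ls \<Longrightarrow> lclause_over n X"
  unfolding resxor_derivation_def valid_line_def by (metis in_set_conv_nth)

lemma resxor_refutation_iff:
  "resxor_refutation n F Ls \<longleftrightarrow> resxor_derivation n F Ls \<and> Ls \<noteq> [] \<and> last Ls = {}"
  unfolding resxor_refutation_def resxor_derivation_def by blast

lemma resxor_refutation_has_empty_clause:
  "resxor_refutation n F Ls \<Longrightarrow> {} \<in> set Ls"
  unfolding resxor_refutation_def by (metis last_in_set)

lemma resxor_inference_sound:
  assumes "resxor_inference n F Ls L"
    and "\<forall>C\<in>set F. eval_lclause \<alpha> (clause_lclause C)" and "\<forall>X\<in>set Ls. eval_lclause \<alpha> X"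
  shows "eval_lclause \<alpha> L"
proof -
  have "eval_lclause \<alpha> L" if "X \<in> set Ls" "Y \<in> set Ls" "res_rule X Y L" for X Y
  proof -
    obtain f C D where XYL: "X = insert (f, False) C" "Y = insert (f, True) D" "L = C \<union> D"
      using \<open>res_rule X Y L\<close> unfolding res_rule_def by blast
    have "eval_lclause \<alpha> X" "eval_lclause \<alpha> Y"
      using that assms(3) by auto
    then show ?thesis
      unfolding XYL eval_lclause_def by (auto simp: eval_leq_def)
  qed
  with assms show ?thesis
    unfolding resxor_inference_def limplies_def by blast
qed

lemma resxor_derivation_sound:
  assumes "resxor_derivation n F Ls" and "\<forall>C\<in>set F. eval_lclause \<alpha> (clause_lclause C)"
  shows "\<forall>L\<in>set Ls. eval_lclause \<alpha> L"
  using assms(1)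
proof (induction Ls rule: rev_induct)
  case (snoc L Ls)
  then have "\<forall>X\<in>set Ls. eval_lclause \<alpha> X" and "resxor_inference n F Ls L"
    by simp_all
  then show ?case
    using resxor_inference_sound[OF _ assms(2)] by simp
qed simp

lemma resxor_refutation_sound:
  assumes "resxor_refutation n F Ls"
  shows "\<exists>C\<in>set F. \<not> eval_lclause \<alpha> (clause_lclause C)"
proof (rule ccontr)
  assume "\<not> ?thesis"
  then have "\<forall>L\<in>set Ls. eval_lclause \<alpha> L"
    using assms resxor_derivation_sound by (auto simp: resxor_refutation_iff)
  moreover have "{} \<in> set Ls"
    using assms by (rule resxor_refutation_has_empty_clause)
  ultimately show False
    unfolding eval_lclause_def by blast
qed

lemma resxor_refutation_pad:
  assumes "resxor_refutation n F Ls" and "length Ls \<le> N"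
  shows "\<exists>Ls'. resxor_refutation n F Ls' \<and> length Ls' = N"
proof -
  have "{} \<in> set Ls"
    using assms(1) by (rule resxor_refutation_has_empty_clause)
  have "resxor_derivation n F (Ls @ replicate k {})" for k
  proof (induction k)
    case (Suc k)
    have "resxor_inference n F (Ls @ replicate k {}) {}"
      using \<open>{} \<in> set Ls\<close>
      by (auto simp: resxor_inference_def lclause_over_def limplies_def)
    moreover have "Ls @ replicate (Suc k) {} = (Ls @ replicate k {}) @ [{}]"
      by (simp add: replicate_append_same)
    ultimately show ?case
      using Suc by (simp only: resxor_derivation_snoc)
  qed (use assms(1) in \<open>simp add: resxor_refutation_iff\<close>)
  moreover have "last (Ls @ replicate k {}) = {}" for k
    using assms(1) by (cases k) (auto simp: resxor_refutation_iff)
  ultimately show ?thesis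
    using assms by (intro exI[of _ "Ls @ replicate (N - length Ls) {}"])
      (auto simp: resxor_refutation_iff)
qed

section \<open>Parities of F_2-sums of sets\<close>

lemma odd_card_filter_insert:
  assumes "finite A" "x \<notin> A"
  shows "odd (card {i \<in> insert x A. P i}) \<longleftrightarrow> odd (card {i \<in> A. P i}) \<noteq> P x"
proof -
  have "{i \<in> insert x A. P i} = (if P x then insert x {i \<in> A. P i} else {i \<in> A. P i})"
    by auto
  then show ?thesis
    using assms by simp
qed

lemma odd_card_filter_singleton [simp]: "odd (card {i. i = x \<and> P i}) \<longleftrightarrow> P x"
  using odd_card_filter_insert[of "{}" x P] by simp

lemma odd_card_sym_diff:
  assumes "finite A" "finite B"
  shows "odd (card (sym_diff A B)) \<longleftrightarrow> odd (card A) \<noteq> odd (card B)"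
proof -
  have "card A = card (A \<inter> B) + card (A - B)"
    using assms(1) by (rule card_Int_Diff)
  moreover have "card B = card (A \<inter> B) + card (B - A)"
    using card_Int_Diff[OF assms(2), of A] by (simp add: Int_commute)
  moreover have "card ((A - B) \<union> (B - A)) = card (A - B) + card (B - A)"
    using assms by (intro card_Un_disjoint) auto
  ultimately show ?thesis
    by auto
qed

(* Over F_2, substituting y_i := (sum of x_u, u in R i) into (sum of y_i, i in S)
   gives (sum of x_u, u in xor_sum R S). *)
definition xor_sum :: "('a \<Rightarrow> 'b set) \<Rightarrow> 'a set \<Rightarrow> 'b set" where
  "xor_sum R S = {u. odd (card {i \<in> S. u \<in> R i})}"

lemma xor_sum_empty [simp]: "xor_sum R {} = {}"
  by (simp add: xor_sum_def)

lemma xor_sum_subset: "xor_sum R S \<subseteq> (\<Union>i\<in>S. R i)"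
  unfolding xor_sum_def by (auto dest!: odd_card_imp_not_empty)

lemma xor_sum_insert:
  assumes "finite S" "i \<notin> S"
  shows "xor_sum R (insert i S) = sym_diff (xor_sum R S) (R i)"
  using odd_card_filter_insert[OF assms] unfolding xor_sum_def by auto

lemma xor_sum_singleton [simp]: "xor_sum R {i} = R i"
  using xor_sum_insert[of "{}" i R] by simp

definition redu :: "('a \<Rightarrow> 'b set) \<Rightarrow> ('b \<Rightarrow> bool) \<Rightarrow> 'a \<Rightarrow> bool" where
  "redu R \<alpha> i \<longleftrightarrow> odd (card {u \<in> R i. \<alpha> u})"

lemma odd_card_xor_sum:
  assumes "finite S" "\<forall>i\<in>S. finite (R i)"
  shows "odd (card {u \<in> xor_sum R S. \<alpha> u}) \<longleftrightarrow> odd (card {i \<in> S. redu R \<alpha> i})"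
  using assms
proof (induction S rule: finite_induct)
  case (insert i S)
  have "finite (xor_sum R S)"
    using insert xor_sum_subset by (metis finite_UN_I finite_subset insert_iff)
  moreover have "{u \<in> xor_sum R (insert i S). \<alpha> u} =
      sym_diff {u \<in> xor_sum R S. \<alpha> u} {u \<in> R i. \<alpha> u}"
    unfolding xor_sum_insert[OF insert(1,2)] by blast
  moreover have "redu R \<alpha> i \<longleftrightarrow> odd (card {u \<in> R i. \<alpha> u})"
    by (simp add: redu_def)
  ultimately show ?case
    using insert odd_card_sym_diff[of "{u \<in> xor_sum R S. \<alpha> u}" "{u \<in> R i. \<alpha> u}"]
      odd_card_filter_insert[OF insert(1,2), of "redu R \<alpha>"]
    by simp
qed simp

section \<open>Substituting the reduction into linear clauses\<close>

definition subst_lclause :: "(nat \<Rightarrow> nat set) \<Rightarrow> lclause \<Rightarrow> lclause" where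
  "subst_lclause R L = (\<lambda>e. (xor_sum R (fst e), snd e)) ` L"

lemma subst_lclause_empty [simp]: "subst_lclause R {} = {}"
  and subst_lclause_insert [simp]:
    "subst_lclause R (insert e L) = insert (xor_sum R (fst e), snd e) (subst_lclause R L)"
  and subst_lclause_Un [simp]: "subst_lclause R (L \<union> L') = subst_lclause R L \<union> subst_lclause R L'"
  by (simp_all add: subst_lclause_def image_Un)

lemma subst_lclause_clause_lclause: "subst_lclause R (clause_lclause g) = subst_clause R g"
  unfolding subst_lclause_def clause_lclause_def subst_clause_def lit_eq_def
  by (simp add: image_image)

lemma lclause_over_subst_lclause:
  assumes "lclause_over n' L" "\<forall>i<n'. R i \<subseteq> {..<n}"
  shows "lclause_over n (subst_lclause R L)"
proof -
  have "xor_sum R S \<subseteq> {..<n}" if "S \<subseteq> {..<n'}" for S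
    using xor_sum_subset[of R S] assms(2) that by blast
  then show ?thesis
    using assms(1) unfolding lclause_over_def subst_lclause_def by auto
qed

lemma eval_subst_lclause:
  assumes "lclause_over n' L" "\<forall>i<n'. R i \<subseteq> {..<n}"
  shows "eval_lclause \<alpha> (subst_lclause R L) \<longleftrightarrow> eval_lclause (redu R \<alpha>) L"
proof -
  have "eval_leq \<alpha> (xor_sum R S, b) \<longleftrightarrow> eval_leq (redu R \<alpha>) (S, b)" if "(S, b) \<in> L" for S b
  proof -
    have "S \<subseteq> {..<n'}"
      using assms(1) that unfolding lclause_over_def by force
    then have "finite S" "\<forall>i\<in>S. finite (R i)"
      using assms(2) by (blast intro: finite_subset[OF _ finite_lessThan])+
    then show ?thesis
      unfolding eval_leq_def by (simp add: odd_card_xor_sum)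
  qed
  then show ?thesis
    unfolding eval_lclause_def subst_lclause_def by auto
qed

lemma res_rule_subst_lclause:
  assumes "res_rule X Y L"
  shows "res_rule (subst_lclause R X) (subst_lclause R Y) (subst_lclause R L)"
proof -
  obtain f C D where "X = insert (f, False) C" "Y = insert (f, True) D" "L = C \<union> D"
    using assms unfolding res_rule_def by blast
  then show ?thesis
    unfolding res_rule_def by (intro exI[of _ "xor_sum R f"]) auto
qed

lemma limplies_subst_lclause:
  assumes "limplies X L" "lclause_over n' X" "lclause_over n' L" "\<forall>i<n'. R i \<subseteq> {..<n}"
  shows "limplies (subst_lclause R X) (subst_lclause R L)"
  using assms unfolding limplies_def by (simp add: eval_subst_lclause)

lemma resxor_inference_subst_lclause:
  assumes "resxor_inference n' G Ls L" "\<forall>X\<in>set Ls. lclause_over n' X"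
    and R: "\<forall>i<n'. R i \<subseteq> {..<n}" and G: "\<forall>g\<in>set G. subst_clause R g \<in> set P"
  shows "resxor_inference n F (P @ map (subst_lclause R) Ls) (subst_lclause R L)"
    (is "resxor_inference n F ?P' ?L'")
proof -
  have L: "lclause_over n' L"
    using assms(1) unfolding resxor_inference_def by blast
  consider C where "C \<in> set G" "L = clause_lclause C"
    | X Y where "X \<in> set Ls" "Y \<in> set Ls" "res_rule X Y L"
    | X where "X \<in> set Ls" "limplies X L"
    using assms(1) unfolding resxor_inference_def by blast
  then have "(\<exists>X\<in>set ?P'. \<exists>Y\<in>set ?P'. res_rule X Y ?L') \<or> (\<exists>X\<in>set ?P'. limplies X ?L')"
  proof cases
    case 1
    then have "?L' \<in> set ?P'"
      using G by (simp add: subst_lclause_clause_lclause)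
    then show ?thesis
      unfolding limplies_def by blast
  next
    case 2
    then show ?thesis
      using res_rule_subst_lclause by fastforce
  next
    case 3
    then show ?thesis
      using limplies_subst_lclause[OF _ _ L R] assms(2) by fastforce
  qed
  then show ?thesis
    using lclause_over_subst_lclause[OF L R] unfolding resxor_inference_def by blast
qed

lemma resxor_derivation_subst_lclause:
  assumes "resxor_derivation n' G Ls" "resxor_derivation n F P"
    and "\<forall>i<n'. R i \<subseteq> {..<n}" and "\<forall>g\<in>set G. subst_clause R g \<in> set P"
  shows "resxor_derivation n F (P @ map (subst_lclause R) Ls)"
  using assms(1)
proof (induction Ls rule: rev_induct)
  case (snoc L Ls)
  then have "resxor_inference n F (P @ map (subst_lclause R) Ls) (subst_lclause R L)"
    using assms(3,4) resxor_derivation_lclause_over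
    by (intro resxor_inference_subst_lclause) auto
  then show ?case
    using snoc by (simp flip: append_assoc)
qed (use assms(2) in simp)

section \<open>Unit clauses and their F_2-sums\<close>

definition units_consistent :: "cnf \<Rightarrow> bool" where
  "units_consistent F \<longleftrightarrow> (\<forall>v. {(v, True)} \<notin> set F \<or> {(v, False)} \<notin> set F)"

definition unit_assignment :: "cnf \<Rightarrow> nat \<Rightarrow> bool" where
  "unit_assignment F v \<longleftrightarrow> {(v, True)} \<in> set F"

lemma unit_assignment_eq:
  "units_consistent F \<Longrightarrow> {(v, b)} \<in> set F \<Longrightarrow> unit_assignment F v = b"
  unfolding units_consistent_def unit_assignment_def by (cases b) auto

lemma unit_clause_nth:
  assumes "j < length F" "card (F ! j) = 1"
  shows "{the_elem (F ! j)} \<in> set F"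
  using assms by (metis card_1_singletonE nth_mem the_elem_eq)

lemma fst_unit_sum: "fst (unit_sum F J) = xor_sum (\<lambda>j. {fst (the_elem (F ! j))}) J"
  unfolding unit_sum_def xor_sum_def by (simp add: eq_commute)

lemma eval_unit_sum:
  assumes "finite J" "\<forall>j\<in>J. eval_leq \<alpha> (lit_eq (the_elem (F ! j)))"
  shows "eval_leq \<alpha> (unit_sum F J)"
proof -
  have "{j \<in> J. redu (\<lambda>j. {fst (the_elem (F ! j))}) \<alpha> j} = {j \<in> J. snd (the_elem (F ! j))}"
    using assms(2) by (auto simp: redu_def eval_leq_def lit_eq_def)
  then show ?thesis
    using odd_card_xor_sum[OF assms(1), of "\<lambda>j. {fst (the_elem (F ! j))}" \<alpha>]
    unfolding eval_leq_def fst_unit_sum by (simp add: unit_sum_def)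
qed

lemma eval_unit_sum_unit_assignment:
  assumes "units_consistent F" "J \<subseteq> {..<length F}" "\<forall>j\<in>J. card (F ! j) = 1"
  shows "eval_leq (unit_assignment F) (unit_sum F J)"
proof (rule eval_unit_sum)
  show "finite J"
    using assms(2) finite_subset by blast
  show "\<forall>j\<in>J. eval_leq (unit_assignment F) (lit_eq (the_elem (F ! j)))"
  proof
    fix j
    assume "j \<in> J"
    then have "{the_elem (F ! j)} \<in> set F"
      using assms(2,3) unit_clause_nth by blast
    then have "unit_assignment F (fst (the_elem (F ! j))) = snd (the_elem (F ! j))"
      using unit_assignment_eq[OF assms(1)] by (metis prod.collapse)
    then show "eval_leq (unit_assignment F) (lit_eq (the_elem (F ! j)))"
      by (simp add: eval_leq_def lit_eq_def)
  qed
qed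

lemma unit_sum_var_unit_clause:
  assumes "units_consistent F" "J \<subseteq> {..<length F}" "\<forall>j\<in>J. card (F ! j) = 1"
    and "v \<in> fst (unit_sum F J)"
  shows "{(v, unit_assignment F v)} \<in> set F"
proof -
  obtain j where "j \<in> J" "fst (the_elem (F ! j)) = v"
    using assms(4) xor_sum_subset unfolding fst_unit_sum by fastforce
  moreover have "{the_elem (F ! j)} \<in> set F"
    using \<open>j \<in> J\<close> assms(2,3) unit_clause_nth by blast
  ultimately have unit: "{(v, snd (the_elem (F ! j)))} \<in> set F"
    by (metis prod.collapse)
  then have "unit_assignment F v = snd (the_elem (F ! j))"
    by (rule unit_assignment_eq[OF assms(1)])
  with unit show ?thesis
    by simp
qed

section \<open>Deriving the substituted clauses of G\<close>

lemma clause_lclause_singleton [simp]: "clause_lclause {(v, b)} = {({v}, b)}"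
  by (simp add: clause_lclause_def lit_eq_def)

lemma resxor_derivation_add_variable:
  assumes "resxor_derivation n F Q" "{(S, c)} \<in> set Q" "{({x}, b)} \<in> set Q"
    and "finite S" "x \<notin> S" "insert x S \<subseteq> {..<n}"
  shows "resxor_derivation n F (Q @ [{(insert x S, c \<noteq> b), ({x}, \<not> b)}, {(insert x S, c \<noteq> b)}])"
proof -
  define W where "W = {(insert x S, c \<noteq> b), ({x}, \<not> b)}"
  define T where "T = {(insert x S, c \<noteq> b)}"
  have over: "lclause_over n W" "lclause_over n T"
    using assms(4,6) unfolding W_def T_def lclause_over_def by auto
  have "limplies {(S, c)} W"
    using odd_card_filter_insert[OF assms(4,5)]
    unfolding W_def limplies_def eval_lclause_def eval_leq_def by auto
  then have "resxor_inference n F Q W"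
    using assms(2) over(1) unfolding resxor_inference_def by blast
  moreover have "res_rule W {({x}, b)} T \<or> res_rule {({x}, b)} W T"
    unfolding W_def T_def res_rule_def by (cases b) auto
  then have "resxor_inference n F (Q @ [W]) T"
    using assms(3) over(2) unfolding resxor_inference_def by auto
  ultimately have "resxor_derivation n F ((Q @ [W]) @ [T])"
    using assms(1) by (metis resxor_derivation_snoc)
  then show ?thesis
    by (simp add: W_def T_def)
qed

lemma resxor_derivation_parity_equation:
  assumes "finite S" "S \<noteq> {}" "S \<subseteq> {..<n}"
    and "resxor_derivation n F Q" "\<forall>v\<in>S. {({v}, \<beta> v)} \<in> set Q"
  shows "\<exists>Q'. resxor_derivation n F (Q @ Q') \<and> length Q' = 2 * (card S - 1) \<and>
    {(S, odd (card {v \<in> S. \<beta> v}))} \<in> set (Q @ Q')"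
  using assms
proof (induction S rule: finite_ne_induct)
  case (singleton x)
  then show ?case
    by (intro exI[of _ "[]"]) simp
next
  case (insert x S)
  then obtain Q1 where Q1: "resxor_derivation n F (Q @ Q1)" "length Q1 = 2 * (card S - 1)"
    "{(S, odd (card {v \<in> S. \<beta> v}))} \<in> set (Q @ Q1)"
    by auto
  let ?c = "odd (card {v \<in> S. \<beta> v})"
  have "odd (card {v \<in> insert x S. \<beta> v}) \<longleftrightarrow> ?c \<noteq> \<beta> x"
    using insert.hyps(1,3) by (rule odd_card_filter_insert)
  moreover have "resxor_derivation n F ((Q @ Q1) @
      [{(insert x S, ?c \<noteq> \<beta> x), ({x}, \<not> \<beta> x)}, {(insert x S, ?c \<noteq> \<beta> x)}])"
    using insert.hyps insert.prems Q1 by (intro resxor_derivation_add_variable) auto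
  moreover have "card S \<ge> 1"
    using insert.hyps by (simp add: Suc_leI card_gt_0_iff)
  ultimately show ?case
    using Q1(2) insert.hyps
    by (intro exI[of _ "Q1 @ [{(insert x S, ?c \<noteq> \<beta> x), ({x}, \<not> \<beta> x)}, {(insert x S, ?c \<noteq> \<beta> x)}]"]) auto
qed

lemma resxor_derivation_unit_sum:
  assumes "cnf_over n F" "units_consistent F" "J \<subseteq> {..<length F}" "\<forall>j\<in>J. card (F ! j) = 1"
    and "\<not> ltaut {unit_sum F J}"
    and "resxor_derivation n F Q" "\<forall>v b. {(v, b)} \<in> set F \<longrightarrow> {({v}, b)} \<in> set Q"
  shows "\<exists>Q'. resxor_derivation n F (Q @ Q') \<and> length Q' \<le> 2 * (n - 1) \<and>
    {unit_sum F J} \<in> set (Q @ Q')"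
proof -
  define S where "S = fst (unit_sum F J)"
  have units: "\<forall>v\<in>S. {(v, unit_assignment F v)} \<in> set F"
    using unit_sum_var_unit_clause[OF assms(2-4)] S_def by blast
  have "S \<subseteq> {..<n}"
    using units assms(1) unfolding cnf_over_def by fastforce
  then have "finite S" "card S \<le> n"
    by (auto intro: finite_subset[OF _ finite_lessThan] dest: card_mono[OF finite_lessThan])
  have "snd (unit_sum F J) = odd (card {v \<in> S. unit_assignment F v})"
    using eval_unit_sum_unit_assignment[OF assms(2-4)] unfolding S_def eval_leq_def by simp
  then have unit_sum: "unit_sum F J = (S, odd (card {v \<in> S. unit_assignment F v}))"
    unfolding S_def by (simp add: prod_eq_iff)
  have "S \<noteq> {}"
  proof
    assume "S = {}"
    then have "ltaut {unit_sum F J}"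
      unfolding unit_sum by (simp add: ltaut_def eval_lclause_def eval_leq_def)
    with assms(5) show False ..
  qed
  then obtain Q' where "resxor_derivation n F (Q @ Q')" "length Q' = 2 * (card S - 1)"
    "{(S, odd (card {v \<in> S. unit_assignment F v}))} \<in> set (Q @ Q')"
    using resxor_derivation_parity_equation[OF \<open>finite S\<close> _ \<open>S \<subseteq> {..<n}\<close> assms(6)]
      units assms(7) by blast
  with \<open>card S \<le> n\<close> show ?thesis
    unfolding unit_sum by (intro exI[of _ Q']) simp
qed

lemma lclause_over_subst_clause:
  assumes "cnf_over n' G" "g \<in> set G" "\<forall>i<n'. R i \<subseteq> {..<n}"
  shows "lclause_over n (subst_clause R g)"
  using lclause_over_subst_lclause[OF lclause_over_clause_lclause[OF assms(1,2)] assms(3)]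
  by (simp add: subst_lclause_clause_lclause)

lemma resxor_derivation_subst_clause:
  assumes "cnf_over n F" "cnf_over n' G" "simple_parity_red n F n' G R" "units_consistent F"
    and "g \<in> set G" "0 < n"
    and "resxor_derivation n F Q" "Q \<noteq> []" "\<forall>v b. {(v, b)} \<in> set F \<longrightarrow> {({v}, b)} \<in> set Q"
  shows "\<exists>Q'. resxor_derivation n F (Q @ Q') \<and> length Q' \<le> 2 * n - 1 \<and>
    subst_clause R g \<in> set (Q @ Q')"
proof (cases "ltaut (subst_clause R g) \<or> (\<exists>f\<in>set F. subst_clause R g = clause_lclause f)")
  case True
  have "lclause_over n (subst_clause R g)"
    using assms(2,3,5) lclause_over_subst_clause unfolding simple_parity_red_def by blast
  moreover have "limplies (hd Q) (subst_clause R g) \<or> (\<exists>f\<in>set F. subst_clause R g = clause_lclause f)"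
    using True unfolding ltaut_def limplies_def by blast
  ultimately have "resxor_inference n F Q (subst_clause R g)"
    using assms(8) unfolding resxor_inference_def by auto
  then show ?thesis
    using assms(6,7) by (intro exI[of _ "[subst_clause R g]"]) auto
next
  case False
  then obtain J where "J \<subseteq> {..<length F}" "\<forall>j\<in>J. card (F ! j) = 1"
    and J: "subst_clause R g = {unit_sum F J}"
    using assms(3,5) unfolding simple_parity_red_def by blast
  then show ?thesis
    using resxor_derivation_unit_sum[OF assms(1,4) _ _ _ assms(7,9), of J] False
    by fastforce
qed

lemma resxor_derivation_subst_clauses:
  assumes "cnf_over n F" "cnf_over n' G" "simple_parity_red n F n' G R" "units_consistent F"
    and "set Gs \<subseteq> set G" "0 < n"
    and "resxor_derivation n F Q" "Q \<noteq> []" "\<forall>v b. {(v, b)} \<in> set F \<longrightarrow> {({v}, b)} \<in> set Q"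
  shows "\<exists>Q'. resxor_derivation n F (Q @ Q') \<and> length Q' \<le> length Gs * (2 * n - 1) \<and>
    (\<forall>g\<in>set Gs. subst_clause R g \<in> set (Q @ Q'))"
  using assms(5,7-9)
proof (induction Gs arbitrary: Q)
  case Nil
  then show ?case
    by (intro exI[of _ "[]"]) simp
next
  case (Cons g Gs)
  have "g \<in> set G"
    using Cons.prems(1) by simp
  then obtain Q1 where Q1: "resxor_derivation n F (Q @ Q1)" "length Q1 \<le> 2 * n - 1"
    "subst_clause R g \<in> set (Q @ Q1)"
    using resxor_derivation_subst_clause[OF assms(1-4) _ assms(6) Cons.prems(2-4)] by blast
  obtain Q2 where Q2: "resxor_derivation n F ((Q @ Q1) @ Q2)"
    "length Q2 \<le> length Gs * (2 * n - 1)" "\<forall>g\<in>set Gs. subst_clause R g \<in> set ((Q @ Q1) @ Q2)"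
    using Cons.IH[of "Q @ Q1"] Cons.prems Q1(1) by auto
  show ?case
    using Q1 Q2 by (intro exI[of _ "Q1 @ Q2"]) auto
qed

lemma resxor_derivation_unit_prefix:
  assumes "cnf_over n F" "units_consistent F" "f \<in> set F"
  shows "\<exists>P. resxor_derivation n F P \<and> length P \<le> n + 1 \<and> clause_lclause f \<in> set P \<and>
    (\<forall>v b. {(v, b)} \<in> set F \<longrightarrow> {({v}, b)} \<in> set P)"
proof -
  define units where "units = filter (\<lambda>C. C \<in> set F) (map (\<lambda>v. {(v, unit_assignment F v)}) [0..<n])"
  define P where "P = map clause_lclause (f # units)"
  have "resxor_derivation n F P"
    using assms(1,3) unfolding P_def units_def by (intro resxor_derivation_initial_clauses) auto
  moreover have "length P \<le> n + 1"
    unfolding P_def units_def using length_filter_le[of _ "map _ [0..<n]"] by simp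
  moreover have "{({v}, b)} \<in> set P" if "{(v, b)} \<in> set F" for v b
  proof -
    have "v < n"
      using assms(1) that unfolding cnf_over_def by fastforce
    moreover have "unit_assignment F v = b"
      using assms(2) that by (rule unit_assignment_eq)
    ultimately have "{(v, b)} \<in> set units"
      unfolding units_def using that by auto
    then show ?thesis
      unfolding P_def by force
  qed
  ultimately show ?thesis
    unfolding P_def by auto
qed

section \<open>Simulating the refutation\<close>

lemma simple_parity_red_initial_clause:
  assumes "cnf_over n' G" "simple_parity_red n F n' G R" "units_consistent F"
    and "resxor_refutation n' G Ls"
  shows "\<exists>g\<in>set G. \<exists>f\<in>set F. subst_clause R g = clause_lclause f"
proof -
  have R: "\<forall>i<n'. R i \<subseteq> {..<n}"
    using assms(2) unfolding simple_parity_red_def by blast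
  obtain g where g: "g \<in> set G" "\<not> eval_lclause (redu R (unit_assignment F)) (clause_lclause g)"
    using resxor_refutation_sound[OF assms(4)] by blast
  then have false: "\<not> eval_lclause (unit_assignment F) (subst_clause R g)"
    using eval_subst_lclause[OF lclause_over_clause_lclause[OF assms(1)] R]
    by (simp add: subst_lclause_clause_lclause)
  then have "\<not> ltaut (subst_clause R g)"
    unfolding ltaut_def by blast
  moreover have "subst_clause R g \<noteq> {unit_sum F J}"
    if "J \<subseteq> {..<length F}" "\<forall>j\<in>J. card (F ! j) = 1" for J
    using false eval_unit_sum_unit_assignment[OF assms(3) that] unfolding eval_lclause_def by auto
  ultimately show ?thesis
    using assms(2) g(1) unfolding simple_parity_red_def by blast
qed

lemma resxor_refutation_empty_clause:
  assumes "{} \<in> set F"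
  shows "resxor_refutation n F [{}]"
proof -
  have "resxor_inference n F [] {}"
    using assms unfolding resxor_inference_def lclause_over_def clause_lclause_def by force
  then show ?thesis
    using resxor_derivation_snoc[of n F "[]" "{}"] by (simp add: resxor_refutation_iff)
qed

lemma resxor_refutation_complementary_units:
  assumes "cnf_over n F" "{(v, True)} \<in> set F" "{(v, False)} \<in> set F"
  shows "resxor_refutation n F [{({v}, True)}, {({v}, False)}, {}]"
proof -
  have "{({v}, b)} \<in> clause_lclause ` set F" if "{(v, b)} \<in> set F" for b
    by (rule image_eqI[of _ clause_lclause "{(v, b)}"]) (simp_all add: that)
  then have "resxor_derivation n F [{({v}, True)}, {({v}, False)}]"
    using assms by (intro resxor_derivation_initial_clauses) auto
  moreover have "res_rule {({v}, False)} {({v}, True)} {}"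
    unfolding res_rule_def by blast
  then have "resxor_inference n F [{({v}, True)}, {({v}, False)}] {}"
    unfolding resxor_inference_def lclause_over_def by auto
  ultimately show ?thesis
    using resxor_derivation_snoc[of n F "[{({v}, True)}, {({v}, False)}]" "{}"]
    by (simp add: resxor_refutation_iff)
qed

lemma resxor_refutation_simple_parity_red_consistent:
  assumes "cnf_over n F" "cnf_over n' G" "simple_parity_red n F n' G R" "units_consistent F"
    and "resxor_refutation n' G Ls"
  shows "\<exists>Ls'. resxor_refutation n F Ls' \<and> length Ls' \<le> 2 * n * length G + length Ls"
proof -
  obtain g0 f0 where g0: "g0 \<in> set G" "f0 \<in> set F" "subst_clause R g0 = clause_lclause f0"
    using simple_parity_red_initial_clause[OF assms(2-5)] by blast
  have "Ls \<noteq> []"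
    using assms(5) by (simp add: resxor_refutation_iff)
  show ?thesis
  proof (cases "n = 0")
    case True
    then have "f0 = {}"
      using assms(1) g0(2) unfolding cnf_over_def by fastforce
    then show ?thesis
      using resxor_refutation_empty_clause g0(2) \<open>Ls \<noteq> []\<close>
      by (intro exI[of _ "[{}]"]) (simp add: Suc_leI)
  next
    case False
    obtain P where P: "resxor_derivation n F P" "length P \<le> n + 1" "clause_lclause f0 \<in> set P"
      "\<forall>v b. {(v, b)} \<in> set F \<longrightarrow> {({v}, b)} \<in> set P"
      using resxor_derivation_unit_prefix[OF assms(1,4) g0(2)] by blast
    have "P \<noteq> []"
      using P(3) by auto
    then obtain Q where Q: "resxor_derivation n F (P @ Q)"
      "length Q \<le> length (remove1 g0 G) * (2 * n - 1)"
      "\<forall>g\<in>set (remove1 g0 G). subst_clause R g \<in> set (P @ Q)"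
      using resxor_derivation_subst_clauses[OF assms(1-4) set_remove1_subset _ P(1) _ P(4)] False
      by blast
    have "\<forall>g\<in>set G. subst_clause R g \<in> set (P @ Q)"
      using Q(3) P(3) g0(3) by (metis Un_iff in_set_remove1 set_append)
    then have "resxor_derivation n F ((P @ Q) @ map (subst_lclause R) Ls)"
      using assms(3,5) Q(1) resxor_derivation_subst_lclause
      unfolding simple_parity_red_def resxor_refutation_iff by blast
    moreover have "length P + length Q \<le> 2 * n * length G"
    proof -
      obtain k j where "length G = Suc k" "n = Suc j"
        using False length_pos_if_in_set[OF g0(1)] by (metis gr0_implies_Suc neq0_conv)
      then show ?thesis
        using P(2) Q(2) g0(1) by (simp add: length_remove1 algebra_simps)
    qed
    ultimately show ?thesis
      using assms(5) \<open>Ls \<noteq> []\<close>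
      by (intro exI[of _ "(P @ Q) @ map (subst_lclause R) Ls"])
        (auto simp: resxor_refutation_iff last_map length_remove1)
  qed
qed

theorem theoremC1:
  fixes n n' s :: nat and F G :: cnf and R :: "nat \<Rightarrow> nat set" and Ls :: "lclause list"
  assumes "cnf_over n F" and "cnf_over n' G"
    and "simple_parity_red n F n' G R"
    and "resxor_refutation n' G Ls" and "length Ls = s"
  shows "\<exists>Ls'. resxor_refutation n F Ls' \<and> length Ls' = 2 * n * length G + s"
proof -
  have "\<exists>Ls'. resxor_refutation n F Ls' \<and> length Ls' \<le> 2 * n * length G + s"
  proof (cases "units_consistent F")
    case True
    then show ?thesis
      using resxor_refutation_simple_parity_red_consistent assms by blast
  next
    case False
    then obtain v where v: "{(v, True)} \<in> set F" "{(v, False)} \<in> set F"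
      unfolding units_consistent_def by blast
    then have "0 < n"
      using assms(1) unfolding cnf_over_def by fastforce
    moreover have "0 < length G" "0 < s"
      using resxor_refutation_sound[OF assms(4)] assms(4,5)
      by (auto simp: resxor_refutation_iff)
    ultimately have "3 \<le> 2 * (n * length G) + s"
      using nat_0_less_mult_iff[of n "length G"] by linarith
    then have "3 \<le> 2 * n * length G + s"
      by (simp only: mult.assoc)
    then show ?thesis
      using resxor_refutation_complementary_units[OF assms(1) v]
      by (intro exI[of _ "[{({v}, True)}, {({v}, False)}, {}]"]) auto
  qed
  then show ?thesis
    using resxor_refutation_pad by blast
qed

end
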